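(* Fix positive integers $l,n,r$. Let $\mathcal{L}$ be the set of isomorphism classes of $(l,n,r)$-hypergraphs and let $\mathcal{S}$ be the set of equivalence classes of bases of $\mathrm{S}_{n,\leq r}$ of size $l$. Then there is a bijection $\rho:\mathcal{L}\to\mathcal{S}$.
   Context: $\mathrm{S}_{n,\leq r}$ denotes the symmetric group $\mathrm{S}_n$ acting naturally on the set of subsets of $[n]=\{1,\dots,n\}$ of size at most $r$. A base of $\mathrm{S}_{n,\leq r}$ is a set $\mathcal{B}$ of (distinct) subsets of $[n]$, each of size at most $r$, whose pointwise stabiliser in $\mathrm{S}_n$ is trivial; its size is $|\mathcal{B}|$. Two bases $\mathcal{B}_1,\mathcal{B}_2$ are equivalent if $\mathcal{B}_1^\sigma=\mathcal{B}_2$ for some $\sigma\in\mathrm{S}_n$. For a hypergraph $H=(V,E)$ (edges are subsets of $V$, possibly the empty set) and $v\in V$, the neighbourhood of $v$ is the multiset $N_H(v)=\{e\in E: v\in e\}$ and the degree of $v$ is $|N_H(v)|$. A hypergraph is irrepeating if all its edges are distinct and all its vertices have distinct neighbourhoods. An $(l,n,r)$-hypergraph is an irrepeating hypergraph with $l$ vertices, $n$ edges (possibly including the empty edge), and maximum vertex degree at most $r$. *)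

theory Defs
  imports "HOL-Combinatorics.Permutations"
begin

text \<open>Hypergraphs are pairs (V, E) with vertices of type nat; every finite
hypergraph is isomorphic to one of this kind. Edges form a set, so they are
automatically distinct.\<close>

type_synonym hypergraph = "nat set \<times> nat set set"

definition nbhd :: "nat set set \<Rightarrow> nat \<Rightarrow> nat set set" where
  "nbhd E v = {e \<in> E. v \<in> e}"

definition is_hypergraph :: "hypergraph \<Rightarrow> bool" where
  "is_hypergraph H \<longleftrightarrow> finite (fst H) \<and> (\<forall>e \<in> snd H. e \<subseteq> fst H)"

definition irrepeating :: "hypergraph \<Rightarrow> bool" where
  "irrepeating H \<longleftrightarrow> is_hypergraph H \<and> inj_on (nbhd (snd H)) (fst H)"

definition lnr_hypergraph :: "nat \<Rightarrow> nat \<Rightarrow> nat \<Rightarrow> hypergraph \<Rightarrow> bool" where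
  "lnr_hypergraph l n r H \<longleftrightarrow> irrepeating H \<and> card (fst H) = l \<and> card (snd H) = n
     \<and> (\<forall>v \<in> fst H. card (nbhd (snd H) v) \<le> r)"

definition hyp_iso :: "hypergraph \<Rightarrow> hypergraph \<Rightarrow> bool" where
  "hyp_iso H1 H2 \<longleftrightarrow> (\<exists>f. bij_betw f (fst H1) (fst H2) \<and> (\<lambda>e. f ` e) ` snd H1 = snd H2)"

definition lnr_classes :: "nat \<Rightarrow> nat \<Rightarrow> nat \<Rightarrow> hypergraph set set" where
  "lnr_classes l n r = {H. lnr_hypergraph l n r H} // {(H1, H2). hyp_iso H1 H2}"

text \<open>Bases of S_n acting on subsets of [n] = {1..n} of size at most r.\<close>

definition is_base :: "nat \<Rightarrow> nat \<Rightarrow> nat set set \<Rightarrow> bool" where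
  "is_base n r B \<longleftrightarrow> (\<forall>b \<in> B. b \<subseteq> {1..n} \<and> card b \<le> r)
     \<and> (\<forall>\<sigma>. \<sigma> permutes {1..n} \<and> (\<forall>b \<in> B. \<sigma> ` b = b) \<longrightarrow> \<sigma> = id)"

definition base_equiv :: "nat \<Rightarrow> nat set set \<Rightarrow> nat set set \<Rightarrow> bool" where
  "base_equiv n B1 B2 \<longleftrightarrow> (\<exists>\<sigma>. \<sigma> permutes {1..n} \<and> (\<lambda>b. \<sigma> ` b) ` B1 = B2)"

definition base_classes :: "nat \<Rightarrow> nat \<Rightarrow> nat \<Rightarrow> nat set set set set" where
  "base_classes l n r = {B. is_base n r B \<and> card B = l} // {(B1, B2). base_equiv n B1 B2}"

end

theory Submission
  imports Defs
begin

text \<open>Transposing the incidence matrix of a hypergraph turns vertices into subsets of the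
edge set: after numbering the edges by \<open>[n]\<close>, a vertex \<open>v\<close> becomes the block of
indices of the edges containing \<open>v\<close>. Distinct neighbourhoods become distinct blocks,
degree at most \<open>r\<close> becomes block size at most \<open>r\<close>, and distinct edges become the
condition that any two points of \<open>[n]\<close> are separated by some block, which is
equivalent to a trivial pointwise stabiliser, since a transposition \<open>(i j)\<close> fixes every
block exactly when no block separates \<open>i\<close> from \<open>j\<close>. Hypergraph isomorphisms and
the equivalence of bases are both isomorphisms of the underlying incidence structures,
so transposition descends to a bijection between the sets of classes.\<close>

lemma bij_betw_quotients_by_correspondence:
  assumes "trans r" and "trans s"
    and s_refl: "\<And>b. b \<in> B \<Longrightarrow> (b, b) \<in> s"
    and s_sym: "\<And>b b'. b \<in> B \<Longrightarrow> b' \<in> B \<Longrightarrow> (b, b') \<in> s \<Longrightarrow> (b', b) \<in> s"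
    and R: "R \<subseteq> A \<times> B" "A \<subseteq> Domain R" "B \<subseteq> Range R"
    and compat: "\<And>a b a' b'. (a, b) \<in> R \<Longrightarrow> (a', b') \<in> R \<Longrightarrow> (a, a') \<in> r \<longleftrightarrow> (b, b') \<in> s"
  shows "bij_betw (\<lambda>X. s `` (R `` X)) (A // r) (B // s)"
  \<comment> \<open>Reflexivity and symmetry of \<open>r\<close> on \<open>A\<close> are inherited from \<open>s\<close> through \<open>compat\<close>.\<close>
proof -
  have r_class_eq: "r `` {a} = r `` {a'} \<longleftrightarrow> (a, a') \<in> r"
    if "(a, b) \<in> R" "(a', b') \<in> R" for a a' b b'
    using that compat[of a b a' b'] compat[of a' b' a b] compat[of a' b' a' b']
      s_refl[of b'] s_sym[of b b'] R(1) \<open>trans r\<close>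
    by (auto dest: transD)
  have s_class_eq: "s `` {b} = s `` {b'} \<longleftrightarrow> (b, b') \<in> s" if "b \<in> B" "b' \<in> B" for b b'
    using that s_refl[of b'] s_sym[of b b'] \<open>trans s\<close> by (auto dest: transD)
  have class_image: "s `` (R `` (r `` {a})) = s `` {b}" if "(a, b) \<in> R" for a b
  proof
    show "s `` (R `` (r `` {a})) \<subseteq> s `` {b}"
      using that compat[of a b] R(1) \<open>trans s\<close> by (auto dest: transD)
    have "(a, a) \<in> r" using compat[OF that that] s_refl R(1) that by blast
    then show "s `` {b} \<subseteq> s `` (R `` (r `` {a}))" using that by blast
  qed
  show ?thesis
  proof (rule bij_betw_imageI)
    show "inj_on (\<lambda>X. s `` (R `` X)) (A // r)"
    proof (rule inj_onI)
      fix X Y assume "X \<in> A // r" "Y \<in> A // r" and image_eq: "s `` (R `` X) = s `` (R `` Y)"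
      then obtain a a' where "a \<in> A" "a' \<in> A" and X: "X = r `` {a}" and Y: "Y = r `` {a'}"
        by (auto elim!: quotientE)
      then obtain b b' where ab: "(a, b) \<in> R" "(a', b') \<in> R" using R(2) by blast
      then have "s `` {b} = s `` {b'}" using class_image image_eq X Y by simp
      moreover have "b \<in> B" "b' \<in> B" using ab R(1) by auto
      ultimately have "(a, a') \<in> r" using s_class_eq compat[OF ab] by simp
      then show "X = Y" using r_class_eq[OF ab] X Y by simp
    qed
    show "(\<lambda>X. s `` (R `` X)) ` (A // r) = B // s"
    proof
      show "(\<lambda>X. s `` (R `` X)) ` (A // r) \<subseteq> B // s"
      proof (rule image_subsetI)
        fix X assume "X \<in> A // r"
        then obtain a where "a \<in> A" "X = r `` {a}" by (auto elim!: quotientE)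
        moreover obtain b where "(a, b) \<in> R" using R(2) \<open>a \<in> A\<close> by blast
        ultimately show "s `` (R `` X) \<in> B // s"
          using class_image R(1) by (auto intro: quotientI)
      qed
      show "B // s \<subseteq> (\<lambda>X. s `` (R `` X)) ` (A // r)"
      proof
        fix Y assume "Y \<in> B // s"
        then obtain b where "b \<in> B" "Y = s `` {b}" by (auto elim!: quotientE)
        moreover obtain a where "(a, b) \<in> R" using R(3) \<open>b \<in> B\<close> by blast
        ultimately have "Y = s `` (R `` (r `` {a}))" "a \<in> A" using class_image R(1) by auto
        then show "Y \<in> (\<lambda>X. s `` (R `` X)) ` (A // r)" by (auto intro: quotientI)
      qed
    qed
  qed
qed

definition incidence_iso ::
  "'a set \<Rightarrow> 'b set \<Rightarrow> ('a \<Rightarrow> 'b \<Rightarrow> bool) \<Rightarrow> 'c set \<Rightarrow> 'd set \<Rightarrow> ('c \<Rightarrow> 'd \<Rightarrow> bool) \<Rightarrow> bool"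
  where "incidence_iso X Y I X' Y' I' \<longleftrightarrow>
    (\<exists>f g. bij_betw f X X' \<and> bij_betw g Y Y' \<and> (\<forall>x\<in>X. \<forall>y\<in>Y. I x y \<longleftrightarrow> I' (f x) (g y)))"

lemma incidence_iso_sym:
  assumes "incidence_iso X Y I X' Y' I'"
  shows "incidence_iso X' Y' I' X Y I"
proof -
  obtain f g where f: "bij_betw f X X'" and g: "bij_betw g Y Y'"
    and inc: "\<forall>x\<in>X. \<forall>y\<in>Y. I x y \<longleftrightarrow> I' (f x) (g y)"
    using assms unfolding incidence_iso_def by blast
  have "I' x y \<longleftrightarrow> I (inv_into X f x) (inv_into Y g y)" if "x \<in> X'" "y \<in> Y'" for x y
  proof -
    have "inv_into X f x \<in> X" "f (inv_into X f x) = x"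
      using that f by (auto simp: bij_betw_def inv_into_into f_inv_into_f)
    moreover have "inv_into Y g y \<in> Y" "g (inv_into Y g y) = y"
      using that g by (auto simp: bij_betw_def inv_into_into f_inv_into_f)
    ultimately show ?thesis using inc by metis
  qed
  then show ?thesis
    using bij_betw_inv_into[OF f] bij_betw_inv_into[OF g] unfolding incidence_iso_def by blast
qed

lemma incidence_iso_trans:
  assumes "incidence_iso X Y I X' Y' I'" and "incidence_iso X' Y' I' X'' Y'' I''"
  shows "incidence_iso X Y I X'' Y'' I''"
proof -
  obtain f g where f: "bij_betw f X X'" and g: "bij_betw g Y Y'"
    and inc: "\<forall>x\<in>X. \<forall>y\<in>Y. I x y \<longleftrightarrow> I' (f x) (g y)"
    using assms(1) unfolding incidence_iso_def by blast
  obtain f' g' where f': "bij_betw f' X' X''" and g': "bij_betw g' Y' Y''"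
    and inc': "\<forall>x\<in>X'. \<forall>y\<in>Y'. I' x y \<longleftrightarrow> I'' (f' x) (g' y)"
    using assms(2) unfolding incidence_iso_def by blast
  have "\<forall>x\<in>X. \<forall>y\<in>Y. I x y \<longleftrightarrow> I'' ((f' \<circ> f) x) ((g' \<circ> g) y)"
    using inc inc' bij_betwE[OF f] bij_betwE[OF g] by simp
  then show ?thesis
    using bij_betw_trans[OF f f'] bij_betw_trans[OF g g'] unfolding incidence_iso_def by blast
qed

lemma incidence_iso_cong:
  assumes "incidence_iso X Y I Z W J" and "incidence_iso X' Y' I' Z' W' J'"
  shows "incidence_iso X Y I X' Y' I' \<longleftrightarrow> incidence_iso Z W J Z' W' J'"
proof
  assume "incidence_iso X Y I X' Y' I'"
  with incidence_iso_sym[OF assms(1)] have "incidence_iso Z W J X' Y' I'"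
    by (rule incidence_iso_trans)
  with assms(2) show "incidence_iso Z W J Z' W' J'" by (blast intro: incidence_iso_trans)
next
  assume "incidence_iso Z W J Z' W' J'"
  with assms(1) have "incidence_iso X Y I Z' W' J'" by (rule incidence_iso_trans)
  with incidence_iso_sym[OF assms(2)] show "incidence_iso X Y I X' Y' I'"
    by (blast intro: incidence_iso_trans)
qed

lemma incidence_iso_transpose:
  "incidence_iso X Y I X' Y' I' \<longleftrightarrow> incidence_iso Y X (\<lambda>y x. I x y) Y' X' (\<lambda>y x. I' x y)"
  unfolding incidence_iso_def by (subst ex_comm) (auto simp: Ball_def)

lemma set_system_iso_iff_incidence_iso:
  assumes "\<forall>e\<in>E. e \<subseteq> V" and "\<forall>e\<in>E'. e \<subseteq> V'"
  shows "(\<exists>f. bij_betw f V V' \<and> (\<lambda>e. f ` e) ` E = E') \<longleftrightarrow>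
    incidence_iso V E (\<lambda>v e. v \<in> e) V' E' (\<lambda>v e. v \<in> e)"
proof
  assume "\<exists>f. bij_betw f V V' \<and> (\<lambda>e. f ` e) ` E = E'"
  then obtain f where f: "bij_betw f V V'" and E': "(\<lambda>e. f ` e) ` E = E'" by blast
  have inj: "inj_on f V" using f by (rule bij_betw_imp_inj_on)
  have "inj_on (\<lambda>e. f ` e) E"
    using inj assms(1) by (auto intro!: inj_onI simp: inj_on_image_eq_iff)
  then have "bij_betw (\<lambda>e. f ` e) E E'" using E' by (simp add: bij_betw_def)
  moreover have "\<forall>v\<in>V. \<forall>e\<in>E. v \<in> e \<longleftrightarrow> f v \<in> f ` e"
    using inj assms(1) by (simp add: inj_on_image_mem_iff)
  ultimately show "incidence_iso V E (\<lambda>v e. v \<in> e) V' E' (\<lambda>v e. v \<in> e)"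
    using f unfolding incidence_iso_def by blast
next
  assume "incidence_iso V E (\<lambda>v e. v \<in> e) V' E' (\<lambda>v e. v \<in> e)"
  then obtain f g where f: "bij_betw f V V'" and g: "bij_betw g E E'"
    and inc: "\<forall>v\<in>V. \<forall>e\<in>E. v \<in> e \<longleftrightarrow> f v \<in> g e"
    unfolding incidence_iso_def by blast
  have "f ` e = g e" if "e \<in> E" for e
  proof
    show "f ` e \<subseteq> g e" using inc assms(1) that by blast
    have "g e \<subseteq> f ` V" using assms(2) g f that by (auto simp: bij_betw_def)
    then show "g e \<subseteq> f ` e" using inc that by blast
  qed
  then have "(\<lambda>e. f ` e) ` E = E'" using g by (auto simp: bij_betw_def)
  then show "\<exists>f. bij_betw f V V' \<and> (\<lambda>e. f ` e) ` E = E'" using f by blast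
qed

lemma ex_permutes_image_iff_ex_bij_betw:
  assumes "\<forall>e\<in>E. e \<subseteq> S"
  shows "(\<exists>\<sigma>. \<sigma> permutes S \<and> (\<lambda>e. \<sigma> ` e) ` E = E') \<longleftrightarrow>
    (\<exists>f. bij_betw f S S \<and> (\<lambda>e. f ` e) ` E = E')"
proof
  assume "\<exists>f. bij_betw f S S \<and> (\<lambda>e. f ` e) ` E = E'"
  then obtain f where f: "bij_betw f S S" and E': "(\<lambda>e. f ` e) ` E = E'" by blast
  have "restrict_id f S ` e = f ` e" if "e \<in> E" for e
    using assms that by (intro image_cong) (auto simp: restrict_id_def)
  then have "(\<lambda>e. restrict_id f S ` e) ` E = E'"
    using E' by (auto intro: image_cong)
  then show "\<exists>\<sigma>. \<sigma> permutes S \<and> (\<lambda>e. \<sigma> ` e) ` E = E'"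
    using permutes_restrict_id[OF f] by blast
qed (auto dest: permutes_imp_bij)

lemma hyp_iso_trans:
  assumes "hyp_iso H H'" and "hyp_iso H' H''"
  shows "hyp_iso H H''"
proof -
  obtain f where f: "bij_betw f (fst H) (fst H')" "(\<lambda>e. f ` e) ` snd H = snd H'"
    using assms(1) unfolding hyp_iso_def by (elim exE conjE)
  obtain f' where f': "bij_betw f' (fst H') (fst H'')" "(\<lambda>e. f' ` e) ` snd H' = snd H''"
    using assms(2) unfolding hyp_iso_def by (elim exE conjE)
  have "bij_betw (f' \<circ> f) (fst H) (fst H'')" using f(1) f'(1) by (rule bij_betw_trans)
  moreover have "(\<lambda>e. (f' \<circ> f) ` e) ` snd H = snd H''"
    unfolding f(2)[symmetric] f'(2)[symmetric] by (simp add: image_image)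
  ultimately show ?thesis unfolding hyp_iso_def by (intro exI conjI)
qed

lemma base_equiv_trans:
  assumes "base_equiv n B B'" and "base_equiv n B' B''"
  shows "base_equiv n B B''"
proof -
  obtain \<sigma> where \<sigma>: "\<sigma> permutes {1..n}" "(\<lambda>b. \<sigma> ` b) ` B = B'"
    using assms(1) unfolding base_equiv_def by (elim exE conjE)
  obtain \<tau> where \<tau>: "\<tau> permutes {1..n}" "(\<lambda>b. \<tau> ` b) ` B' = B''"
    using assms(2) unfolding base_equiv_def by (elim exE conjE)
  have "\<tau> \<circ> \<sigma> permutes {1..n}" using \<sigma>(1) \<tau>(1) by (rule permutes_compose)
  moreover have "(\<lambda>b. (\<tau> \<circ> \<sigma>) ` b) ` B = B''"
    unfolding \<sigma>(2)[symmetric] \<tau>(2)[symmetric] by (simp add: image_image)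
  ultimately show ?thesis unfolding base_equiv_def by (intro exI conjI)
qed

lemma base_equiv_refl: "base_equiv n B B"
  unfolding base_equiv_def by (intro exI[of _ id]) (simp add: permutes_id)

lemma base_equiv_sym:
  assumes "base_equiv n B B'"
  shows "base_equiv n B' B"
proof -
  obtain \<sigma> where \<sigma>: "\<sigma> permutes {1..n}" and B': "(\<lambda>b. \<sigma> ` b) ` B = B'"
    using assms unfolding base_equiv_def by (elim exE conjE)
  have "(\<lambda>b. inv \<sigma> ` b) ` B' = B"
    unfolding B'[symmetric] by (simp add: image_image permutes_inverses[OF \<sigma>])
  then show ?thesis using permutes_inv[OF \<sigma>] unfolding base_equiv_def by blast
qed

lemma hyp_iso_iff_incidence_iso:
  assumes "is_hypergraph H" and "is_hypergraph H'"
  shows "hyp_iso H H' \<longleftrightarrow>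
    incidence_iso (fst H) (snd H) (\<lambda>v e. v \<in> e) (fst H') (snd H') (\<lambda>v e. v \<in> e)"
  unfolding hyp_iso_def
  by (rule set_system_iso_iff_incidence_iso) (use assms in \<open>auto simp: is_hypergraph_def\<close>)

lemma base_equiv_iff_incidence_iso:
  assumes "\<forall>b\<in>B. b \<subseteq> {1..n}" and "\<forall>b\<in>B'. b \<subseteq> {1..n}"
  shows "base_equiv n B B' \<longleftrightarrow>
    incidence_iso B {1..n} (\<lambda>b i. i \<in> b) B' {1..n} (\<lambda>b i. i \<in> b)"
proof -
  have "base_equiv n B B' \<longleftrightarrow> (\<exists>f. bij_betw f {1..n} {1..n} \<and> (\<lambda>b. f ` b) ` B = B')"
    unfolding base_equiv_def by (rule ex_permutes_image_iff_ex_bij_betw[OF assms(1)])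
  also have "\<dots> \<longleftrightarrow> incidence_iso {1..n} B (\<lambda>i b. i \<in> b) {1..n} B' (\<lambda>i b. i \<in> b)"
    by (rule set_system_iso_iff_incidence_iso[OF assms])
  also have "\<dots> \<longleftrightarrow> incidence_iso B {1..n} (\<lambda>b i. i \<in> b) B' {1..n} (\<lambda>b i. i \<in> b)"
    by (rule incidence_iso_transpose)
  finally show ?thesis .
qed

lemma setwise_stabiliser_trivial_iff_separating:
  "(\<forall>\<sigma>. \<sigma> permutes S \<and> (\<forall>b\<in>B. \<sigma> ` b = b) \<longrightarrow> \<sigma> = id) \<longleftrightarrow>
    (\<forall>i\<in>S. \<forall>j\<in>S. (\<forall>b\<in>B. i \<in> b \<longleftrightarrow> j \<in> b) \<longrightarrow> i = j)"
proof
  assume stab: "\<forall>\<sigma>. \<sigma> permutes S \<and> (\<forall>b\<in>B. \<sigma> ` b = b) \<longrightarrow> \<sigma> = id"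
  show "\<forall>i\<in>S. \<forall>j\<in>S. (\<forall>b\<in>B. i \<in> b \<longleftrightarrow> j \<in> b) \<longrightarrow> i = j"
  proof (intro ballI impI)
    fix i j assume "i \<in> S" "j \<in> S" and same: "\<forall>b\<in>B. i \<in> b \<longleftrightarrow> j \<in> b"
    have "transpose i j ` b = b" if "b \<in> B" for b
    proof -
      have "transpose i j x \<in> b \<longleftrightarrow> x \<in> b" for x
        using same that by (cases "x = i"; cases "x = j") auto
      then show ?thesis by (auto simp: in_transpose_image_iff)
    qed
    then have "transpose i j = id"
      using stab permutes_swap_id[OF \<open>i \<in> S\<close> \<open>j \<in> S\<close>] by simp
    then show "i = j" by (simp add: transpose_eq_id_iff)
  qed
next
  assume sep: "\<forall>i\<in>S. \<forall>j\<in>S. (\<forall>b\<in>B. i \<in> b \<longleftrightarrow> j \<in> b) \<longrightarrow> i = j"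
  show "\<forall>\<sigma>. \<sigma> permutes S \<and> (\<forall>b\<in>B. \<sigma> ` b = b) \<longrightarrow> \<sigma> = id"
  proof (intro allI impI, elim conjE)
    fix \<sigma> assume \<sigma>: "\<sigma> permutes S" and fixed: "\<forall>b\<in>B. \<sigma> ` b = b"
    have "\<sigma> i = i" for i
    proof (cases "i \<in> S")
      case True
      have "\<sigma> i \<in> b \<longleftrightarrow> i \<in> b" if "b \<in> B" for b
        using inj_image_mem_iff[OF permutes_inj[OF \<sigma>], of i b] fixed that by simp
      moreover have "\<sigma> i \<in> S" using permutes_in_image[OF \<sigma>] True by simp
      ultimately show ?thesis using sep True by blast
    next
      case False
      then show ?thesis using permutes_not_in[OF \<sigma>] by simp
    qed
    then show "\<sigma> = id" by auto
  qed
qed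

lemma is_base_iff_separating:
  "is_base n r B \<longleftrightarrow> (\<forall>b\<in>B. b \<subseteq> {1..n} \<and> card b \<le> r) \<and>
    (\<forall>i\<in>{1..n}. \<forall>j\<in>{1..n}. (\<forall>b\<in>B. i \<in> b \<longleftrightarrow> j \<in> b) \<longrightarrow> i = j)"
  unfolding is_base_def setwise_stabiliser_trivial_iff_separating ..

definition dual_base :: "nat \<Rightarrow> hypergraph \<Rightarrow> nat set set \<Rightarrow> bool" where
  "dual_base n H B \<longleftrightarrow> incidence_iso (fst H) (snd H) (\<lambda>v e. v \<in> e) B {1..n} (\<lambda>b i. i \<in> b)"

lemma hyp_iso_iff_base_equiv:
  assumes "is_hypergraph H" and "is_hypergraph H'"
    and "\<forall>b\<in>B. b \<subseteq> {1..n}" and "\<forall>b\<in>B'. b \<subseteq> {1..n}"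
    and "dual_base n H B" and "dual_base n H' B'"
  shows "hyp_iso H H' \<longleftrightarrow> base_equiv n B B'"
  unfolding hyp_iso_iff_incidence_iso[OF assms(1,2)] base_equiv_iff_incidence_iso[OF assms(3,4)]
  using assms(5,6) unfolding dual_base_def by (rule incidence_iso_cong)

lemma lnr_hypergraph_has_dual_base:
  assumes "lnr_hypergraph l n r H"
  obtains B where "is_base n r B" and "card B = l" and "dual_base n H B"
proof -
  obtain V E where H: "H = (V, E)" by fastforce
  have "finite V" and edges: "\<forall>e\<in>E. e \<subseteq> V" and inj_nbhd: "inj_on (nbhd E) V"
    and "card V = l" and "card E = n" and degree: "\<forall>v\<in>V. card (nbhd E v) \<le> r"
    using assms unfolding H lnr_hypergraph_def irrepeating_def is_hypergraph_def by auto
  have "E \<subseteq> Pow V" using edges by blast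
  then have "finite E" using \<open>finite V\<close> by (simp add: finite_subset)
  then obtain \<phi> where \<phi>: "bij_betw \<phi> E {1..n}"
    using finite_same_card_bij[of E "{1..n}"] \<open>card E = n\<close> by auto
  have inj_\<phi>: "inj_on \<phi> E" using \<phi> by (rule bij_betw_imp_inj_on)
  have nbhd_sub: "nbhd E v \<subseteq> E" for v unfolding nbhd_def by blast
  define \<psi> where "\<psi> v = \<phi> ` nbhd E v" for v
  have incidence: "\<forall>v\<in>V. \<forall>e\<in>E. v \<in> e \<longleftrightarrow> \<phi> e \<in> \<psi> v"
  proof (intro ballI)
    fix v e assume "e \<in> E"
    then show "v \<in> e \<longleftrightarrow> \<phi> e \<in> \<psi> v"
      unfolding \<psi>_def inj_on_image_mem_iff[OF inj_\<phi> \<open>e \<in> E\<close> nbhd_sub] by (simp add: nbhd_def)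
  qed
  have "inj_on \<psi> V"
  proof (rule inj_onI)
    fix v w assume "v \<in> V" "w \<in> V" "\<psi> v = \<psi> w"
    then have "nbhd E v = nbhd E w"
      unfolding \<psi>_def using inj_on_image_eq_iff[OF inj_\<phi> nbhd_sub nbhd_sub] by simp
    then show "v = w" using inj_nbhd \<open>v \<in> V\<close> \<open>w \<in> V\<close> by (simp add: inj_on_eq_iff)
  qed
  then have \<psi>: "bij_betw \<psi> V (\<psi> ` V)" by (rule inj_on_imp_bij_betw)
  have "is_base n r (\<psi> ` V)"
    unfolding is_base_iff_separating
  proof (intro conjI ballI impI)
    fix b assume "b \<in> \<psi> ` V"
    then obtain v where "v \<in> V" and b: "b = \<psi> v" by blast
    show "b \<subseteq> {1..n}" using \<phi> nbhd_sub unfolding b \<psi>_def bij_betw_def by blast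
    have "card b = card (nbhd E v)"
      unfolding b \<psi>_def by (rule card_image[OF inj_on_subset[OF inj_\<phi> nbhd_sub]])
    then show "card b \<le> r" using degree \<open>v \<in> V\<close> by simp
  next
    fix i j assume "i \<in> {1..n}" "j \<in> {1..n}" and same: "\<forall>b\<in>\<psi> ` V. i \<in> b \<longleftrightarrow> j \<in> b"
    then have "i \<in> \<phi> ` E" "j \<in> \<phi> ` E" using \<phi> by (simp_all add: bij_betw_def)
    then obtain e e' where "e \<in> E" "e' \<in> E" and ij: "i = \<phi> e" "j = \<phi> e'" by (elim imageE)
    have "v \<in> e \<longleftrightarrow> v \<in> e'" for v
    proof (cases "v \<in> V")
      case True
      then have "\<psi> v \<in> \<psi> ` V" by blast
      then show ?thesis using same incidence True \<open>e \<in> E\<close> \<open>e' \<in> E\<close> ij by simp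
    qed (use edges \<open>e \<in> E\<close> \<open>e' \<in> E\<close> in blast)
    then have "e = e'" by blast
    then show "i = j" using ij by simp
  qed
  moreover have "card (\<psi> ` V) = l" using \<psi> \<open>card V = l\<close> by (simp add: bij_betw_same_card)
  moreover have "dual_base n H (\<psi> ` V)"
    unfolding dual_base_def incidence_iso_def H using \<psi> \<phi> incidence by auto
  ultimately show thesis using that by blast
qed

lemma base_has_dual_lnr_hypergraph:
  assumes "is_base n r B"
  obtains H where "lnr_hypergraph (card B) n r H" and "dual_base n H B"
proof -
  have blocks: "\<forall>b\<in>B. b \<subseteq> {1..n} \<and> card b \<le> r"
    and separating: "\<forall>i\<in>{1..n}. \<forall>j\<in>{1..n}. (\<forall>b\<in>B. i \<in> b \<longleftrightarrow> j \<in> b) \<longrightarrow> i = j"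
    using assms unfolding is_base_iff_separating by blast+
  have "B \<subseteq> Pow {1..n}" using blocks by blast
  then have "finite B" by (simp add: finite_subset)
  then obtain \<psi> where \<psi>: "bij_betw \<psi> {0..<card B} B"
    using ex_bij_betw_nat_finite by blast
  define V where "V = {0..<card B}"
  define col where "col i = {v \<in> V. i \<in> \<psi> v}" for i
  define E where "E = col ` {1..n}"
  have block_\<psi>: "\<psi> v \<subseteq> {1..n}" "card (\<psi> v) \<le> r" if "v \<in> V" for v
    using bij_betwE[OF \<psi>] blocks that unfolding V_def by auto
  have inj_col: "inj_on col {1..n}"
  proof (rule inj_onI)
    fix i j assume "i \<in> {1..n}" "j \<in> {1..n}" and "col i = col j"
    then have "\<forall>v\<in>V. i \<in> \<psi> v \<longleftrightarrow> j \<in> \<psi> v" unfolding col_def set_eq_iff by blast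
    moreover have "B = \<psi> ` V" using \<psi> unfolding V_def bij_betw_def by simp
    ultimately have "\<forall>b\<in>B. i \<in> b \<longleftrightarrow> j \<in> b" by simp
    then show "i = j" using separating \<open>i \<in> {1..n}\<close> \<open>j \<in> {1..n}\<close> by blast
  qed
  then have col: "bij_betw col {1..n} E" unfolding E_def by (rule inj_on_imp_bij_betw)
  have nbhd: "nbhd E v = col ` \<psi> v" if "v \<in> V" for v
    using block_\<psi>[OF that] that unfolding nbhd_def E_def col_def by auto
  have "inj_on (nbhd E) V"
  proof (rule inj_onI)
    fix v w assume "v \<in> V" "w \<in> V" "nbhd E v = nbhd E w"
    then have "col ` \<psi> v = col ` \<psi> w" using nbhd by simp
    then have "\<psi> v = \<psi> w"
      using inj_on_image_eq_iff[OF inj_col block_\<psi>(1)[OF \<open>v \<in> V\<close>] block_\<psi>(1)[OF \<open>w \<in> V\<close>]] by simp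
    then show "v = w"
      using bij_betw_imp_inj_on[OF \<psi>] \<open>v \<in> V\<close> \<open>w \<in> V\<close> unfolding V_def by (simp add: inj_on_eq_iff)
  qed
  moreover have "card (nbhd E v) \<le> r" if "v \<in> V" for v
    using nbhd[OF that] card_image[OF inj_on_subset[OF inj_col block_\<psi>(1)[OF that]]] block_\<psi>[OF that]
    by simp
  moreover have "is_hypergraph (V, E)"
    unfolding is_hypergraph_def V_def E_def col_def by auto
  moreover have "card V = card B" "card E = n"
    using bij_betw_same_card[OF col] by (simp_all add: V_def)
  ultimately have "lnr_hypergraph (card B) n r (V, E)"
    unfolding lnr_hypergraph_def irrepeating_def by simp
  moreover have "dual_base n (V, E) B"
  proof -
    define \<phi> where "\<phi> = inv_into {1..n} col"
    have "bij_betw \<phi> E {1..n}" unfolding \<phi>_def using col by (rule bij_betw_inv_into)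
    moreover have "\<forall>v\<in>V. \<forall>e\<in>E. v \<in> e \<longleftrightarrow> \<phi> e \<in> \<psi> v"
    proof (intro ballI)
      fix v e assume "v \<in> V" "e \<in> E"
      then obtain i where "i \<in> {1..n}" and e: "e = col i" unfolding E_def by blast
      then have "\<phi> e = i" unfolding \<phi>_def using inv_into_f_f[OF inj_col] by simp
      then show "v \<in> e \<longleftrightarrow> \<phi> e \<in> \<psi> v" using \<open>v \<in> V\<close> unfolding e col_def by simp
    qed
    ultimately show ?thesis
      unfolding dual_base_def incidence_iso_def using \<psi> unfolding V_def by auto
  qed
  ultimately show thesis using that by blast
qed

theorem proposition2p2:
  fixes l n r :: nat
  assumes "0 < l" and "0 < n" and "0 < r"
  shows "\<exists>\<rho>. bij_betw \<rho> (lnr_classes l n r) (base_classes l n r)"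
proof -
  let ?A = "{H. lnr_hypergraph l n r H}" and ?B = "{B. is_base n r B \<and> card B = l}"
  let ?R = "{(H, B). H \<in> ?A \<and> B \<in> ?B \<and> dual_base n H B}"
  have "bij_betw (\<lambda>X. {(B, B'). base_equiv n B B'} `` (?R `` X)) (lnr_classes l n r) (base_classes l n r)"
    unfolding lnr_classes_def base_classes_def
  proof (rule bij_betw_quotients_by_correspondence)
    show "trans {(H, H'). hyp_iso H H'}" by (auto intro: transI hyp_iso_trans)
    show "trans {(B, B'). base_equiv n B B'}" by (auto intro: transI base_equiv_trans)
    show "(B, B) \<in> {(B, B'). base_equiv n B B'}" for B by (simp add: base_equiv_refl)
    show "(B', B) \<in> {(B, B'). base_equiv n B B'}" if "(B, B') \<in> {(B, B'). base_equiv n B B'}" for B B'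
      using that by (simp add: base_equiv_sym)
    show "?R \<subseteq> ?A \<times> ?B" by auto
    show "?A \<subseteq> Domain ?R" by (blast elim: lnr_hypergraph_has_dual_base)
    show "?B \<subseteq> Range ?R" by (blast elim: base_has_dual_lnr_hypergraph)
    show "(H, H') \<in> {(H, H'). hyp_iso H H'} \<longleftrightarrow> (B, B') \<in> {(B, B'). base_equiv n B B'}"
      if "(H, B) \<in> ?R" and "(H', B') \<in> ?R" for H B H' B'
      using that hyp_iso_iff_base_equiv
      by (auto simp: lnr_hypergraph_def irrepeating_def is_base_def)
  qed
  then show ?thesis by blast
qed

end
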